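(* Let $\mathcal{A}$ and $\mathcal{B}$ be alternative $W^{*}$-factors with identities $1_{\mathcal{A}},1_{\mathcal{B}}$, with $\mathcal{A}$ containing a projection $p\notin\{0,1_{\mathcal{A}}\}$, and let $\Phi:\mathcal{A}\to\mathcal{B}$ be a bijection satisfying $\Phi(ab-ba^{*})=\Phi(a)\Phi(b)-\Phi(b)\Phi(a)^{*}$ for all $a,b\in\mathcal{A}$. Then either $\Phi(ia)=i\Phi(a)$ for all $a\in\mathcal{A}$, or $\Phi(ia)=-i\Phi(a)$ for all $a\in\mathcal{A}$.
   Context: An alternative $W^{*}$-factor is a prime alternative $C^{*}$-algebra (complete normed alternative complex $\ast$-algebra with $\|a^{*}a\|=\|a\|^{2}$, where alternative means $a^{2}b=a(ab)$, $ba^{2}=(ba)a$) that is a dual Banach space; it is unital with center $\mathbb{C}1$. A projection is a nonzero self-adjoint idempotent. *)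

theory Defs
  imports "HOL-Analysis.Analysis"
begin

definition complex_normed_space :: "(complex \<Rightarrow> 'a::real_normed_vector \<Rightarrow> 'a) \<Rightarrow> bool" where
  "complex_normed_space sc \<longleftrightarrow>
     (\<forall>x. sc 1 x = x) \<and>
     (\<forall>c d x. sc c (sc d x) = sc (c * d) x) \<and>
     (\<forall>c x y. sc c (x + y) = sc c x + sc c y) \<and>
     (\<forall>c d x. sc (c + d) x = sc c x + sc d x) \<and>
     (\<forall>r x. sc (complex_of_real r) x = r *\<^sub>R x) \<and>
     (\<forall>c x. norm (sc c x) = cmod c * norm x)"

definition alt_C_star_algebra ::
  "(complex \<Rightarrow> 'a::banach \<Rightarrow> 'a) \<Rightarrow> ('a \<Rightarrow> 'a \<Rightarrow> 'a) \<Rightarrow> ('a \<Rightarrow> 'a) \<Rightarrow> bool" where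
  "alt_C_star_algebra sc mul st \<longleftrightarrow>
     complex_normed_space sc \<and>
     (\<forall>x y z. mul (x + y) z = mul x z + mul y z) \<and>
     (\<forall>x y z. mul x (y + z) = mul x y + mul x z) \<and>
     (\<forall>c x y. mul (sc c x) y = sc c (mul x y)) \<and>
     (\<forall>c x y. mul x (sc c y) = sc c (mul x y)) \<and>
     (\<forall>x y. norm (mul x y) \<le> norm x * norm y) \<and>
     (\<forall>x y. st (x + y) = st x + st y) \<and>
     (\<forall>c x. st (sc c x) = sc (cnj c) (st x)) \<and>
     (\<forall>x. st (st x) = x) \<and>
     (\<forall>x y. st (mul x y) = mul (st y) (st x)) \<and>
     (\<forall>a. norm (mul (st a) a) = (norm a)\<^sup>2) \<and>
     (\<forall>a b. mul (mul a a) b = mul a (mul a b)) \<and>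
     (\<forall>a b. mul b (mul a a) = mul (mul b a) a)"

definition alg_ideal ::
  "(complex \<Rightarrow> 'a::banach \<Rightarrow> 'a) \<Rightarrow> ('a \<Rightarrow> 'a \<Rightarrow> 'a) \<Rightarrow> 'a set \<Rightarrow> bool" where
  "alg_ideal sc mul I \<longleftrightarrow>
     0 \<in> I \<and> (\<forall>x\<in>I. \<forall>y\<in>I. x + y \<in> I) \<and> (\<forall>c. \<forall>x\<in>I. sc c x \<in> I) \<and>
     (\<forall>a. \<forall>x\<in>I. mul a x \<in> I \<and> mul x a \<in> I)"

definition prime_algebra ::
  "(complex \<Rightarrow> 'a::banach \<Rightarrow> 'a) \<Rightarrow> ('a \<Rightarrow> 'a \<Rightarrow> 'a) \<Rightarrow> bool" where
  "prime_algebra sc mul \<longleftrightarrow>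
     (\<forall>I J. alg_ideal sc mul I \<and> alg_ideal sc mul J \<and> (\<forall>x\<in>I. \<forall>y\<in>J. mul x y = 0)
        \<longrightarrow> I = {0} \<or> J = {0})"

definition is_dual_of ::
  "(complex \<Rightarrow> 'a::banach \<Rightarrow> 'a) \<Rightarrow> (complex \<Rightarrow> 'x::banach \<Rightarrow> 'x) \<Rightarrow> bool" where
  "is_dual_of sc scX \<longleftrightarrow>
     (\<exists>T :: 'a \<Rightarrow> ('x \<Rightarrow> complex).
        bij_betw T UNIV {f. bounded_linear f \<and> (\<forall>c x. f (scX c x) = c * f x)} \<and>
        (\<forall>a b. T (a + b) = (\<lambda>x. T a x + T b x)) \<and>
        (\<forall>c a. T (sc c a) = (\<lambda>x. c * T a x)) \<and>
        (\<forall>a. norm a = onorm (T a)))"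

text \<open>Alternative W*-factor: prime alternative C*-algebra which is a dual Banach space
(with a predual living in the type 'x).\<close>
definition alt_W_star_factor ::
  "(complex \<Rightarrow> 'a::banach \<Rightarrow> 'a) \<Rightarrow> ('a \<Rightarrow> 'a \<Rightarrow> 'a) \<Rightarrow> ('a \<Rightarrow> 'a) \<Rightarrow> 'x::banach itself \<Rightarrow> bool" where
  "alt_W_star_factor sc mul st (_ :: 'x itself) \<longleftrightarrow>
     alt_C_star_algebra sc mul st \<and> prime_algebra sc mul \<and>
     (\<exists>scX :: complex \<Rightarrow> 'x \<Rightarrow> 'x. complex_normed_space scX \<and> is_dual_of sc scX)"

definition is_projection :: "('a::banach \<Rightarrow> 'a \<Rightarrow> 'a) \<Rightarrow> ('a \<Rightarrow> 'a) \<Rightarrow> 'a \<Rightarrow> bool" where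
  "is_projection mul st p \<longleftrightarrow> p \<noteq> 0 \<and> st p = p \<and> mul p p = p"

end

theory Submission
  imports Defs
begin

text \<open>Write \<open>a \<circ> b = ab - ba\<^sup>*\<close>. In \<open>\<A>\<close> one has \<open>((\<i>/2)1) \<circ> b = \<i>b\<close>, and
  \<open>b \<mapsto> \<i>b\<close> commutes with every \<open>a \<circ> -\<close>; transported by \<open>\<Phi>\<close>, the operator \<open>T = Z \<circ> -\<close>
  with \<open>Z = \<Phi>((\<i>/2)1)\<close> commutes with every \<open>x \<circ> -\<close> on \<open>\<B>\<close>. Evaluating this at \<open>1\<close>, once for \<open>x\<close>
  and once for \<open>\<i>x\<close>, shows that \<open>T\<close> is multiplication by the central skew element
  \<open>D = Z - Z\<^sup>*\<close>, so \<open>\<Phi>(\<i>a) = D\<Phi>(a)\<close> and \<open>D\<^sup>4 = 1\<close>. In a prime algebra a central element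
  \<open>u\<close> with \<open>u\<^sup>2 = 1\<close> is \<open>\<plusminus>1\<close>, because the central idempotents \<open>(1 \<plusminus> u)/2\<close> generate
  ideals annihilating each other. Hence \<open>D\<^sup>2 = \<plusminus>1\<close>; skewness excludes \<open>D = \<plusminus>1\<close>, so \<open>D = \<plusminus>\<i>1\<close>.\<close>

lemma eq_of_linear_system:
  fixes p q r :: "'a::real_vector"
  assumes "p + r = q + q" "r + r = q + p"
  shows "p = q"
proof -
  have three: "(3::real) *\<^sub>R v = v + (v + v)" for v :: 'a
    using scaleR_add_left[of 1 2 v] by (simp add: scaleR_2)
  have "r = q + q - p" using assms(1) by (metis add_diff_cancel_left')
  with assms(2) have "q + (q + q) = p + (p + p)" by (simp add: algebra_simps)
  then have "(3::real) *\<^sub>R p = (3::real) *\<^sub>R q" by (simp only: three)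
  then show ?thesis by simp
qed

lemma eq_of_sum_and_difference:
  fixes p q a b c d :: "'a::real_vector"
  assumes "p - q = a - b - (c - d)" "p + q = a + b - (c + d)"
  shows "p = a - c" "q = b - d"
proof -
  have "(2::real) *\<^sub>R p = (2::real) *\<^sub>R (a - c)"
    using arg_cong2[OF assms, of "(+)"] by (simp add: scaleR_2 algebra_simps)
  moreover have "(2::real) *\<^sub>R q = (2::real) *\<^sub>R (b - d)"
    using arg_cong2[OF assms(2,1), of "(-)"] by (simp add: scaleR_2 algebra_simps)
  ultimately show "p = a - c" "q = b - d" by simp_all
qed

locale unital_alt_C_star_algebra =
  fixes sc :: "complex \<Rightarrow> 'a::banach \<Rightarrow> 'a" and mul :: "'a \<Rightarrow> 'a \<Rightarrow> 'a" and st :: "'a \<Rightarrow> 'a"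
    and one :: 'a
  assumes alt: "alt_C_star_algebra sc mul st"
    and unit: "\<forall>x. mul one x = x \<and> mul x one = x"
begin

lemmas axioms = alt[unfolded alt_C_star_algebra_def complex_normed_space_def]

lemma mul_one_left [simp]: "mul one x = x" using unit by blast
lemma mul_one_right [simp]: "mul x one = x" using unit by blast
lemma sc_one [simp]: "sc 1 x = x" using axioms by simp
lemma sc_sc [simp]: "sc c (sc d x) = sc (c * d) x" using axioms by simp
lemma sc_add_right: "sc c (x + y) = sc c x + sc c y" using axioms by simp
lemma sc_add_left: "sc (c + d) x = sc c x + sc d x" using axioms by simp
lemma sc_of_real: "sc (complex_of_real r) x = r *\<^sub>R x" using axioms by simp
lemma mul_add_left: "mul (x + y) z = mul x z + mul y z" using axioms by simp
lemma mul_add_right: "mul x (y + z) = mul x y + mul x z" using axioms by simp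
lemma mul_sc_left [simp]: "mul (sc c x) y = sc c (mul x y)" using axioms by simp
lemma mul_sc_right [simp]: "mul x (sc c y) = sc c (mul x y)" using axioms by simp
lemma st_add: "st (x + y) = st x + st y" using axioms by simp
lemma st_sc [simp]: "st (sc c x) = sc (cnj c) (st x)" using axioms by simp
lemma st_st [simp]: "st (st x) = x" using axioms by simp
lemma st_mul: "st (mul x y) = mul (st y) (st x)" using axioms by simp
lemma left_alternative: "mul (mul a a) b = mul a (mul a b)" using axioms by simp
lemma right_alternative: "mul b (mul a a) = mul (mul b a) a" using axioms by simp

lemma mul_zero_left [simp]: "mul 0 x = 0"
  using mul_add_left[of 0 0 x] by simp

lemma mul_zero_right [simp]: "mul x 0 = 0"
  using mul_add_right[of x 0 0] by simp

lemma mul_minus_left [simp]: "mul (- x) y = - mul x y"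
  using mul_add_left[of x "- x" y] by (simp, metis minus_unique)

lemma mul_minus_right [simp]: "mul x (- y) = - mul x y"
  using mul_add_right[of x y "- y"] by (simp, metis minus_unique)

lemma mul_diff_left: "mul (x - y) z = mul x z - mul y z"
  using mul_add_left[of x "- y" z] by simp

lemma mul_diff_right: "mul x (y - z) = mul x y - mul x z"
  using mul_add_right[of x y "- z"] by simp

lemma st_minus [simp]: "st (- x) = - st x"
  using st_add[of x "- x"] st_add[of 0 0] by (simp, metis minus_unique)

lemma st_diff: "st (x - y) = st x - st y"
  using st_add[of x "- y"] by simp

lemma sc_zero_left [simp]: "sc 0 x = 0"
  using sc_of_real[of 0 x] by simp

lemma sc_minus_right [simp]: "sc c (- x) = - sc c x"
  using sc_add_right[of c x "- x"] sc_add_right[of c 0 0] by (simp, metis minus_unique)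

lemma sc_minus_left: "sc (- c) x = - sc c x"
  using sc_add_left[of c "- c" x] by (simp, metis minus_unique)

lemma sc_diff_right: "sc c (x - y) = sc c x - sc c y"
  using sc_add_right[of c x "- y"] by simp

lemma mul_scaleR_left [simp]: "mul (r *\<^sub>R x) y = r *\<^sub>R mul x y"
  by (metis sc_of_real mul_sc_left)

lemma mul_scaleR_right [simp]: "mul x (r *\<^sub>R y) = r *\<^sub>R mul x y"
  by (metis sc_of_real mul_sc_right)

lemma st_one [simp]: "st one = one"
  by (metis st_mul mul_one_left st_st)

lemma sc_cancel: "c \<noteq> 0 \<Longrightarrow> sc c x = sc c y \<Longrightarrow> x = y"
  by (metis sc_sc sc_one right_inverse mult.commute)

lemma trivial_if_one_eq_zero: "one = 0 \<Longrightarrow> (x::'a) = 0"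
  by (metis mul_one_right mul_zero_right)

lemma left_alternative_linearized:
  "mul (mul x y) z + mul (mul y x) z = mul x (mul y z) + mul y (mul x z)"
  using left_alternative[of "x + y" z]
  by (simp add: mul_add_left mul_add_right left_alternative algebra_simps)

lemma right_alternative_linearized:
  "mul z (mul x y) + mul z (mul y x) = mul (mul z x) y + mul (mul z y) x"
  using right_alternative[of z "x + y"]
  by (simp add: mul_add_left mul_add_right right_alternative[symmetric] algebra_simps)

definition central :: "'a \<Rightarrow> bool" where
  "central z \<longleftrightarrow> (\<forall>y. mul z y = mul y z)"

lemma central_commute: "central z \<Longrightarrow> mul z y = mul y z"
  unfolding central_def by blast

text \<open>The two linearized alternative laws give a linear system for the associators
  involving a central element, whose only solution is that they vanish.\<close>

lemma central_assoc_right: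
  assumes "central z" shows "mul (mul x y) z = mul x (mul y z)"
proof -
  note comm = central_commute[OF assms]
  have "mul x (mul y z) + mul x (mul y z) = mul (mul x y) z + mul (mul z x) y"
    using right_alternative_linearized[of x y z] by (simp only: comm)
  moreover have "mul (mul z x) y + mul (mul z x) y = mul x (mul y z) + mul (mul x y) z"
    using left_alternative_linearized[of x z y] by (simp only: comm)
  ultimately show ?thesis by (metis eq_of_linear_system)
qed

lemma central_assoc_mid:
  assumes "central z" shows "mul (mul x z) y = mul x (mul z y)"
  using right_alternative_linearized[of x y z]
  by (simp only: central_assoc_right[OF assms] add_left_cancel)

lemma central_assoc_left:
  assumes "central z" shows "mul (mul z x) y = mul z (mul x y)"
  using left_alternative_linearized[of x z y]
  by (simp only: central_assoc_mid[OF assms] add_left_cancel)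

lemma central_mul_swap:
  assumes "central z" shows "mul x (mul z y) = mul z (mul x y)"
  by (metis assms central_assoc_left central_assoc_mid central_commute)

lemma central_mul: "central a \<Longrightarrow> central b \<Longrightarrow> central (mul a b)"
  unfolding central_def
  by (metis central_assoc_left central_assoc_right central_commute central_def)

lemma central_add: "central a \<Longrightarrow> central b \<Longrightarrow> central (a + b)"
  unfolding central_def by (simp add: mul_add_left mul_add_right)

lemma central_diff: "central a \<Longrightarrow> central b \<Longrightarrow> central (a - b)"
  unfolding central_def by (simp add: mul_diff_left mul_diff_right)

lemma central_scaleR: "central a \<Longrightarrow> central (r *\<^sub>R a)"
  unfolding central_def by simp

lemma central_sc: "central a \<Longrightarrow> central (sc c a)"
  unfolding central_def by simp

lemma central_one: "central one"
  unfolding central_def by simp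

lemma alg_ideal_central_range:
  assumes "central e" shows "alg_ideal sc mul (range (mul e))"
proof -
  have "mul e u + mul e v \<in> range (mul e)" "sc c (mul e u) \<in> range (mul e)"
    and "mul a (mul e u) \<in> range (mul e)" "mul (mul e u) a \<in> range (mul e)" for a c u v
    by (simp_all add: mul_add_right[symmetric] central_mul_swap[OF assms]
        central_assoc_left[OF assms] del: mul_sc_right add: mul_sc_right[symmetric])
  moreover have "0 \<in> range (mul e)" using rangeI[of "mul e" 0] by simp
  ultimately show ?thesis unfolding alg_ideal_def by blast
qed

lemma central_idempotent_trivial:
  assumes "prime_algebra sc mul" and e: "central e" "mul e e = e"
  shows "e = 0 \<or> e = one"
proof -
  define f where "f = one - e"
  have f: "central f" "mul e f = 0"
    unfolding f_def using e by (auto intro: central_diff central_one simp: mul_diff_right)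
  have "mul (mul e u) (mul f v) = mul (mul e f) (mul u v)" for u v
    using f(1) e(1) by (simp add: central_assoc_left central_mul_swap)
  then have "mul (mul e u) (mul f v) = 0" for u v
    using f(2) by simp
  with assms(1) alg_ideal_central_range[OF e(1)] alg_ideal_central_range[OF f(1)]
  have "range (mul e) = {0} \<or> range (mul f) = {0}"
    unfolding prime_algebra_def by blast
  then have "e = 0 \<or> f = 0"
    by (metis mul_one_right rangeI singletonD)
  then show ?thesis unfolding f_def by auto
qed

lemma central_square_one:
  assumes "prime_algebra sc mul" and u: "central u" "mul u u = one"
  shows "u = one \<or> u = - one"
proof -
  define e where "e = (1/2::real) *\<^sub>R (one + u)"
  have "central e"
    unfolding e_def by (intro central_scaleR central_add central_one u)
  moreover have "mul (one + u) (one + u) = (2::real) *\<^sub>R (one + u)"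
    using u by (simp add: mul_add_left mul_add_right scaleR_2 algebra_simps)
  then have "mul e e = e"
    unfolding e_def by simp
  ultimately have "e = 0 \<or> e = one"
    using central_idempotent_trivial[OF assms(1)] by blast
  moreover have "one + u = (2::real) *\<^sub>R e" unfolding e_def by simp
  ultimately show ?thesis by (auto simp: scaleR_2 neg_eq_iff_add_eq_0[symmetric])
qed

lemma central_skew_fourth_root_of_one:
  assumes "prime_algebra sc mul" "one \<noteq> 0"
    and D: "central D" "st D = - D" "mul (mul D D) (mul D D) = one"
  shows "D = sc \<i> one \<or> D = sc (- \<i>) one"
proof -
  have "mul D D = one \<or> mul D D = - one"
    using assms central_square_one central_mul by blast
  moreover have "mul D D \<noteq> one"
  proof
    assume "mul D D = one"
    then have "D = one \<or> D = - one" using central_square_one assms by blast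
    then have "one = - one" using D(2) by auto
    then have "(2::real) *\<^sub>R one = 0"
      unfolding scaleR_2 by (metis eq_neg_iff_add_eq_0)
    with assms(2) show False by simp
  qed
  ultimately have "mul (sc \<i> D) (sc \<i> D) = one"
    by (simp add: sc_minus_left)
  then have "sc \<i> D = one \<or> sc \<i> D = - one"
    using central_square_one central_sc assms by blast
  moreover have "D = sc (- \<i>) c" if "sc \<i> D = c" for c
    using arg_cong[OF that, of "sc (- \<i>)"] by simp
  ultimately have "D = sc (- \<i>) one \<or> D = sc (- \<i>) (- one)" by blast
  then show ?thesis by (auto simp: sc_minus_left)
qed

definition skew_prod :: "'a \<Rightarrow> 'a \<Rightarrow> 'a" where
  "skew_prod a b = mul a b - mul b (st a)"

lemma skew_prod_sc_right: "skew_prod a (sc c b) = sc c (skew_prod a b)"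
  unfolding skew_prod_def by (simp add: sc_diff_right)

lemma skew_prod_half_i_one: "skew_prod (sc (\<i>/2) one) b = sc \<i> b"
proof -
  have "skew_prod (sc (\<i>/2) one) b = sc (\<i>/2) b + sc (\<i>/2) b"
    unfolding skew_prod_def by (simp add: sc_minus_left)
  then show ?thesis by (simp add: sc_add_left[symmetric])
qed

text \<open>Replacing \<open>x\<close> by \<open>\<i>x\<close> in the commutation relation evaluated at \<open>one\<close>
  turns the differences \<open>xD - Dx\<^sup>*\<close> into the corresponding sums; adding and
  subtracting the two identities separates \<open>xD\<close> from \<open>Dx\<^sup>*\<close>.\<close>

lemma skew_prod_commuting_at_one:
  assumes comm: "\<And>x. skew_prod x (skew_prod Z one) = skew_prod Z (skew_prod x one)"
  shows "central (Z - st Z)" and "skew_prod Z x = mul (Z - st Z) x"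
proof -
  define D where "D = Z - st Z"
  have diff: "mul x D - mul D (st x) = mul Z x - mul Z (st x) - (mul x (st Z) - mul (st x) (st Z))"
    for x
    using comm[of x] unfolding skew_prod_def D_def
    by (simp add: mul_diff_left mul_diff_right st_diff)
  have "sc \<i> (mul x D + mul D (st x))
        = sc \<i> (mul Z x + mul Z (st x) - (mul x (st Z) + mul (st x) (st Z)))" for x
    using diff[of "sc \<i> x"] by (simp add: sc_minus_left sc_add_right sc_diff_right algebra_simps)
  then have sum: "mul x D + mul D (st x) = mul Z x + mul Z (st x) - (mul x (st Z) + mul (st x) (st Z))"
    for x
    by (rule sc_cancel[rotated]) simp
  have right: "mul x D = skew_prod Z x" and left: "mul D (st x) = skew_prod Z (st x)" for x
    using eq_of_sum_and_difference[OF diff sum] unfolding skew_prod_def by simp_all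
  show "skew_prod Z x = mul (Z - st Z) x"
    using left[of "st x"] unfolding D_def by simp
  show "central (Z - st Z)"
    unfolding central_def using left[of "st _"] right unfolding D_def by simp
qed

end

theorem lemma2p9:
  fixes scA :: "complex \<Rightarrow> 'a::banach \<Rightarrow> 'a" and mulA :: "'a \<Rightarrow> 'a \<Rightarrow> 'a" and stA :: "'a \<Rightarrow> 'a"
    and scB :: "complex \<Rightarrow> 'b::banach \<Rightarrow> 'b" and mulB :: "'b \<Rightarrow> 'b \<Rightarrow> 'b" and stB :: "'b \<Rightarrow> 'b"
    and oneA :: 'a and oneB :: 'b and p :: 'a
    and Phi :: "'a \<Rightarrow> 'b"
  assumes A: "alt_W_star_factor scA mulA stA TYPE('x::banach)"
    and B: "alt_W_star_factor scB mulB stB TYPE('y::banach)"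
    and oneA: "\<forall>x. mulA oneA x = x \<and> mulA x oneA = x"
    and oneB: "\<forall>y. mulB oneB y = y \<and> mulB y oneB = y"
    and p: "is_projection mulA stA p" "p \<noteq> oneA"
    and bij: "bij Phi"
    and hom: "\<forall>a b. Phi (mulA a b - mulA b (stA a)) = mulB (Phi a) (Phi b) - mulB (Phi b) (stB (Phi a))"
  shows "(\<forall>a. Phi (scA \<i> a) = scB \<i> (Phi a)) \<or> (\<forall>a. Phi (scA \<i> a) = scB (- \<i>) (Phi a))"
proof -
  interpret A: unital_alt_C_star_algebra scA mulA stA oneA
    using A oneA unfolding alt_W_star_factor_def by unfold_locales blast+
  interpret B: unital_alt_C_star_algebra scB mulB stB oneB
    using B oneB unfolding alt_W_star_factor_def by unfold_locales blast+
  have prime: "prime_algebra scB mulB" using B unfolding alt_W_star_factor_def by blast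
  have surj: "\<exists>a. y = Phi a" for y using bij by (metis bij_pointE)
  have Phi_skew: "Phi (A.skew_prod a b) = B.skew_prod (Phi a) (Phi b)" for a b
    using hom unfolding A.skew_prod_def B.skew_prod_def by blast
  define Z where "Z = Phi (scA (\<i>/2) oneA)"
  have "B.skew_prod (Phi a) (B.skew_prod Z (Phi b)) = B.skew_prod Z (B.skew_prod (Phi a) (Phi b))"
    for a b
    unfolding Z_def Phi_skew[symmetric] by (simp add: A.skew_prod_half_i_one A.skew_prod_sc_right)
  then have "B.skew_prod x (B.skew_prod Z oneB) = B.skew_prod Z (B.skew_prod x oneB)" for x
    using surj by metis
  note D = B.skew_prod_commuting_at_one[OF this]
  define D where "D = Z - stB Z"
  have Phi_i: "Phi (scA \<i> a) = mulB D (Phi a)" for a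
    using D(2) Phi_skew[of "scA (\<i>/2) oneA"] unfolding D_def Z_def
    by (simp add: A.skew_prod_half_i_one)
  obtain b0 where b0: "oneB = Phi b0" using surj by blast
  have "b0 = scA \<i> (scA \<i> (scA \<i> (scA \<i> b0)))" by simp
  then have "oneB = mulB D (mulB D (mulB D (mulB D oneB)))" using b0 by (metis Phi_i)
  then have "mulB (mulB D D) (mulB D D) = oneB" by (simp add: B.left_alternative)
  moreover have "B.central D" "stB D = - D"
    using D(1) unfolding D_def by (simp_all add: B.st_diff)
  moreover have "oneB \<noteq> 0"
  proof
    assume "oneB = 0"
    then have "Phi p = Phi 0" using B.trivial_if_one_eq_zero by metis
    with p(1) bij show False unfolding is_projection_def by (metis bij_is_inj injD)
  qed
  ultimately have "D = scB \<i> oneB \<or> D = scB (- \<i>) oneB"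
    using B.central_skew_fourth_root_of_one[OF prime] by blast
  with Phi_i show ?thesis by auto
qed

end
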